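(* Let $H$ be a Hilbert space over $\mathbb{R}$ or $\mathbb{C}$, $V\subseteq H$, $n\ge1$, and let $C_1,\dots,C_n$ be closed convex subsets of $H$ with $0\in C_n\subseteq C_{n-1}\subseteq\cdots\subseteq C_1\subseteq V$. Let $P_{C_i}:V\to V$ be the metric projection onto $C_i$ and $P=P_{C_n}\circ\cdots\circ P_{C_1}$. Then $P_{C_n}$ is the unique pseudo-inverse of $P$ (with respect to the norm of $H$). In particular, for a closed convex $C\subseteq V$ with $0\in C$, $P_C$ is its own unique pseudo-inverse.
   Context: The metric projection onto a nonempty closed convex subset $C$ of a Hilbert space maps each point to its unique nearest point in $C$. For subsets $V,W$ of normed spaces and $T:V\to W$, an operator $S:W\to V$ is a pseudo-inverse of $T$ if: (BAS) for every $w\in W$, the minimum $m_w=\min_{v\in V}\|T(v)-w\|$ is attained, the norm attains its minimum on $\{v\in V:\|T(v)-w\|=m_w\}$, and $S(w)\in\arg\min\{\|v\|:v\in V,\ \|T(v)-w\|=m_w\}$; and (MP2) $S\circ T\circ S=S$. *)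

theory Defs
  imports "HOL-Analysis.Analysis"
begin

text \<open>Same definition as the library's closest_point, which however is
  restricted to heine_borel (finite-dimensional) spaces.\<close>
definition metric_proj :: "'a::real_inner set \<Rightarrow> 'a \<Rightarrow> 'a" where
  "metric_proj C x = (SOME y. y \<in> C \<and> (\<forall>z\<in>C. dist x y \<le> dist x z))"

definition pseudo_inverse ::
  "'a::real_normed_vector set \<Rightarrow> 'b::real_normed_vector set \<Rightarrow> ('a \<Rightarrow> 'b) \<Rightarrow> ('b \<Rightarrow> 'a) \<Rightarrow> bool"
where
  "pseudo_inverse V W T S \<longleftrightarrow>
     (\<forall>w\<in>W.
        (\<exists>v0\<in>V. \<forall>v\<in>V. norm (T v0 - w) \<le> norm (T v - w)) \<and>
        (let m = (INF v\<in>V. norm (T v - w));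
             A = {v\<in>V. norm (T v - w) = m}
         in (\<exists>a\<in>A. \<forall>b\<in>A. norm a \<le> norm b) \<and>
            S w \<in> A \<and> (\<forall>b\<in>A. norm (S w) \<le> norm b))) \<and>
     (\<forall>w\<in>W. S (T (S w)) = S w)"

fun proj_comp :: "(nat \<Rightarrow> 'a::real_inner set) \<Rightarrow> nat \<Rightarrow> 'a \<Rightarrow> 'a" where
  "proj_comp C 0 = id"
| "proj_comp C (Suc k) = metric_proj (C (Suc k)) \<circ> proj_comp C k"

end

theory Submission
  imports Defs
begin

text \<open>
  Write P for the composed projection and p for the projection onto C n.  P maps V into C n,
  fixes C n pointwise, and shrinks the norm strictly except at its fixed points, because every
  projection onto a closed convex set containing 0 does (Pythagoras plus the variational
  inequality).  Hence for each w the minimisers of norm (P v - w) are exactly the v with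
  P v = p w, and p w is the unique one of least norm: norm (p w) = norm (P v) \<le> norm v, with
  equality only if v = P v.  The projections exist in a Hilbert space because minimising
  sequences are Cauchy by the parallelogram law.
\<close>

lemma parallelogram_law:
  fixes x y :: "'a::real_inner"
  shows "norm (x + y)^2 + norm (x - y)^2 = 2 * norm x^2 + 2 * norm y^2"
  by (simp add: power2_norm_eq_inner inner_add inner_diff inner_commute algebra_simps)

lemma infdist_minimizing_sequence:
  fixes a :: "'a::metric_space"
  assumes "S \<noteq> {}"
  obtains f where "\<And>k. f k \<in> S" "(\<lambda>k. dist a (f k)) \<longlonglongrightarrow> infdist a S"
proof -
  have "infdist a S \<in> closure (dist a ` S)"
    unfolding infdist_notempty[OF assms] using assms by (intro closure_contains_Inf) auto
  then obtain u where u: "\<And>k. u k \<in> dist a ` S" "u \<longlonglongrightarrow> infdist a S"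
    unfolding closure_sequential by blast
  have "\<forall>k. \<exists>y. y \<in> S \<and> u k = dist a y"
    using u(1) by blast
  then obtain f where f: "\<And>k. f k \<in> S" "\<And>k. u k = dist a (f k)"
    by metis
  have "(\<lambda>k. dist a (f k)) = u"
    using f(2) by (simp add: fun_eq_iff)
  with f(1) u(2) show thesis
    by (intro that[of f]) auto
qed

text \<open>The midpoint of x and y lies in S; apply the parallelogram law to a - x and a - y.\<close>
lemma norm_diff_sq_le_infdist:
  fixes a :: "'a::real_inner"
  assumes "convex S" "x \<in> S" "y \<in> S"
  shows "norm (x - y)^2 \<le> 2 * dist a x^2 + 2 * dist a y^2 - 4 * infdist a S^2"
proof -
  have "(1/2) *\<^sub>R x + (1/2) *\<^sub>R y \<in> S"
    using assms by (intro convexD) auto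
  then have "2 * infdist a S \<le> 2 * dist a ((1/2) *\<^sub>R x + (1/2) *\<^sub>R y)"
    by (simp add: infdist_le)
  also have "\<dots> = norm ((a - x) + (a - y))"
  proof -
    have "(a - x) + (a - y) = 2 *\<^sub>R (a - ((1/2) *\<^sub>R x + (1/2) *\<^sub>R y))"
      by (simp add: algebra_simps scaleR_2)
    then show ?thesis
      by (simp add: dist_norm)
  qed
  finally have "(2 * infdist a S)^2 \<le> norm ((a - x) + (a - y))^2"
    by (intro power_mono) (auto simp: infdist_nonneg)
  moreover have "norm ((a - x) + (a - y))^2 + norm (x - y)^2 = 2 * dist a x^2 + 2 * dist a y^2"
    using parallelogram_law[of "a - x" "a - y"] by (simp add: dist_norm norm_minus_commute)
  ultimately show ?thesis
    by (simp add: power_mult_distrib)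
qed

lemma Cauchy_minimizing_sequence:
  fixes a :: "'a::real_inner"
  assumes "convex S" "\<And>k. f k \<in> S" "(\<lambda>k. dist a (f k)) \<longlonglongrightarrow> infdist a S"
  shows "Cauchy f"
proof (rule metric_CauchyI)
  fix e :: real
  assume "e > 0"
  have "(\<lambda>k. dist a (f k)^2) \<longlonglongrightarrow> infdist a S^2"
    using assms(3) by (intro tendsto_intros)
  moreover have "infdist a S^2 < infdist a S^2 + e^2 / 4"
    using \<open>e > 0\<close> by simp
  ultimately have "\<forall>\<^sub>F k in sequentially. dist a (f k)^2 < infdist a S^2 + e^2 / 4"
    by (rule order_tendstoD)
  then obtain N where N: "\<And>k. k \<ge> N \<Longrightarrow> dist a (f k)^2 < infdist a S^2 + e^2 / 4"
    unfolding eventually_sequentially by blast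
  have "dist (f m) (f k) < e" if "m \<ge> N" "k \<ge> N" for m k
  proof -
    have "dist (f m) (f k)^2 \<le> 2 * dist a (f m)^2 + 2 * dist a (f k)^2 - 4 * infdist a S^2"
      using norm_diff_sq_le_infdist[OF assms(1,2,2)] by (simp add: dist_norm)
    also have "\<dots> < e^2"
      using N[OF \<open>m \<ge> N\<close>] N[OF \<open>k \<ge> N\<close>] by simp
    finally show ?thesis
      using \<open>e > 0\<close> by (simp add: power_less_imp_less_base)
  qed
  then show "\<exists>N. \<forall>m\<ge>N. \<forall>k\<ge>N. dist (f m) (f k) < e"
    by blast
qed

lemma closest_point_exists_complete:
  fixes a :: "'a::{real_inner,complete_space}"
  assumes "closed S" "convex S" "S \<noteq> {}"
  shows "\<exists>y\<in>S. \<forall>z\<in>S. dist a y \<le> dist a z"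
proof -
  obtain f where f: "\<And>k. f k \<in> S" "(\<lambda>k. dist a (f k)) \<longlonglongrightarrow> infdist a S"
    using infdist_minimizing_sequence[OF assms(3)] by blast
  obtain l where l: "f \<longlonglongrightarrow> l"
    using Cauchy_minimizing_sequence[OF assms(2) f] by (auto simp: Cauchy_convergent_iff convergent_def)
  have "l \<in> S"
    using closed_sequentially[OF assms(1) _ l] f(1) by blast
  moreover have "dist a l = infdist a S"
    using l f(2) by (intro LIMSEQ_unique[of "\<lambda>k. dist a (f k)"] tendsto_intros)
  ultimately show ?thesis
    by (metis infdist_le)
qed

lemma metric_proj_closest:
  fixes x :: "'a::{real_inner,complete_space}"
  assumes "closed C" "convex C" "C \<noteq> {}"
  shows "metric_proj C x \<in> C" "\<forall>z\<in>C. dist x (metric_proj C x) \<le> dist x z"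
proof -
  have "\<exists>y. y \<in> C \<and> (\<forall>z\<in>C. dist x y \<le> dist x z)"
    using closest_point_exists_complete[OF assms] by blast
  then have "metric_proj C x \<in> C \<and> (\<forall>z\<in>C. dist x (metric_proj C x) \<le> dist x z)"
    unfolding metric_proj_def by (rule someI_ex)
  then show "metric_proj C x \<in> C" "\<forall>z\<in>C. dist x (metric_proj C x) \<le> dist x z"
    by auto
qed

lemma metric_proj_eqI:
  fixes x :: "'a::real_inner"
  assumes "closed C" "convex C" "y \<in> C" "\<forall>z\<in>C. dist x y \<le> dist x z"
  shows "metric_proj C x = y"
  unfolding metric_proj_def
proof (rule someI2[of _ y])
  show "y \<in> C \<and> (\<forall>z\<in>C. dist x y \<le> dist x z)"
    using assms(3,4) ..
qed (use any_closest_point_unique[OF assms(2,1) _ assms(3) _ assms(4)] in blast)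

lemma metric_proj_id:
  fixes x :: "'a::real_inner"
  assumes "closed C" "convex C" "x \<in> C"
  shows "metric_proj C x = x"
  using metric_proj_eqI[OF assms] by simp

lemma norm_metric_proj_sq_le:
  fixes x :: "'a::{real_inner,complete_space}"
  assumes "closed C" "convex C" "0 \<in> C"
  shows "norm (metric_proj C x)^2 + norm (x - metric_proj C x)^2 \<le> norm x^2"
proof -
  let ?p = "metric_proj C x"
  have "inner (x - ?p) (0 - ?p) \<le> 0"
    using assms metric_proj_closest[OF assms(1,2)]
    by (intro any_closest_point_dot[OF assms(2,1)]) auto
  moreover have "norm x^2 = norm ?p^2 + norm (x - ?p)^2 + 2 * inner (x - ?p) ?p"
    by (simp add: power2_norm_eq_inner inner_diff inner_commute algebra_simps)
  ultimately show ?thesis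
    by (simp add: inner_minus_right)
qed

definition shrinks_norm :: "('a::real_normed_vector \<Rightarrow> 'a) \<Rightarrow> bool" where
  "shrinks_norm f \<longleftrightarrow> (\<forall>x. norm (f x) \<le> norm x \<and> (norm (f x) = norm x \<longrightarrow> f x = x))"

lemma shrinks_norm_id: "shrinks_norm id"
  by (simp add: shrinks_norm_def)

lemma shrinks_norm_comp:
  assumes "shrinks_norm f" "shrinks_norm g"
  shows "shrinks_norm (f \<circ> g)"
  unfolding shrinks_norm_def
proof
  fix x
  have f: "norm (f (g x)) \<le> norm (g x)" "norm (f (g x)) = norm (g x) \<Longrightarrow> f (g x) = g x"
    using assms(1) unfolding shrinks_norm_def by blast+
  have g: "norm (g x) \<le> norm x" "norm (g x) = norm x \<Longrightarrow> g x = x"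
    using assms(2) unfolding shrinks_norm_def by blast+
  have "norm (f (g x)) = norm x \<Longrightarrow> f (g x) = x"
  proof -
    assume "norm (f (g x)) = norm x"
    then have "norm (g x) = norm x" "norm (f (g x)) = norm (g x)"
      using f(1) g(1) by linarith+
    then show "f (g x) = x"
      using f(2) g(2) by simp
  qed
  then show "norm ((f \<circ> g) x) \<le> norm x \<and> (norm ((f \<circ> g) x) = norm x \<longrightarrow> (f \<circ> g) x = x)"
    using f(1) g(1) by simp
qed

lemma shrinks_norm_metric_proj:
  fixes C :: "'a::{real_inner,complete_space} set"
  assumes "closed C" "convex C" "0 \<in> C"
  shows "shrinks_norm (metric_proj C)"
  unfolding shrinks_norm_def
proof
  fix x
  let ?p = "metric_proj C x"
  have sq: "norm ?p^2 + norm (x - ?p)^2 \<le> norm x^2"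
    by (rule norm_metric_proj_sq_le[OF assms])
  then have "norm ?p^2 \<le> norm x^2"
    using zero_le_power2[of "norm (x - ?p)"] by linarith
  then have "norm ?p \<le> norm x"
    by (rule power2_le_imp_le) simp
  moreover have "?p = x" if "norm ?p = norm x"
  proof -
    have "norm (x - ?p)^2 \<le> 0"
      using sq that by simp
    then show ?thesis
      by simp
  qed
  ultimately show "norm ?p \<le> norm x \<and> (norm ?p = norm x \<longrightarrow> ?p = x)"
    by blast
qed

lemma proj_comp_fixes:
  fixes C :: "nat \<Rightarrow> 'a::real_inner set"
  assumes "\<forall>i\<in>{1..k}. closed (C i) \<and> convex (C i) \<and> c \<in> C i"
  shows "proj_comp C k c = c"
  using assms by (induction k) (simp_all add: metric_proj_id)

lemma shrinks_norm_proj_comp: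
  fixes C :: "nat \<Rightarrow> 'a::{real_inner,complete_space} set"
  assumes "\<forall>i\<in>{1..k}. closed (C i) \<and> convex (C i) \<and> 0 \<in> C i"
  shows "shrinks_norm (proj_comp C k)"
  using assms by (induction k) (simp_all add: shrinks_norm_id shrinks_norm_comp shrinks_norm_metric_proj)

lemma proj_comp_in:
  fixes C :: "nat \<Rightarrow> 'a::{real_inner,complete_space} set"
  assumes "k \<ge> 1" "closed (C k)" "convex (C k)" "C k \<noteq> {}"
  shows "proj_comp C k v \<in> C k"
  using assms metric_proj_closest(1) by (cases k) auto

locale nearest_point_retraction =
  fixes V K :: "'a::real_normed_vector set" and T p :: "'a \<Rightarrow> 'a"
  assumes K_subset_V: "K \<subseteq> V"
    and T_in_K: "v \<in> V \<Longrightarrow> T v \<in> K"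
    and T_fixes_K: "k \<in> K \<Longrightarrow> T k = k"
    and shrinks_norm_T: "shrinks_norm T"
    and p_in_K: "p w \<in> K"
    and p_nearest: "k \<in> K \<Longrightarrow> norm (p w - w) \<le> norm (k - w)"
    and p_unique: "k \<in> K \<Longrightarrow> norm (k - w) = norm (p w - w) \<Longrightarrow> k = p w"
begin

lemma INF_residual_eq: "(INF v\<in>V. norm (T v - w)) = norm (p w - w)"
proof (rule cInf_eq_minimum)
  show "norm (p w - w) \<in> (\<lambda>v. norm (T v - w)) ` V"
    using K_subset_V p_in_K T_fixes_K by (intro image_eqI[of _ _ "p w"]) auto
qed (use T_in_K p_nearest in auto)

lemma residual_minimal_iff:
  assumes "v \<in> V"
  shows "norm (T v - w) = norm (p w - w) \<longleftrightarrow> T v = p w"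
  using p_unique T_in_K[OF assms] by auto

lemma norm_p_le:
  assumes "v \<in> V" "T v = p w"
  shows "norm (p w) \<le> norm v"
  using shrinks_norm_T assms(2) unfolding shrinks_norm_def by metis

lemma pseudo_inverse_p: "pseudo_inverse V W T p"
proof -
  define A where "A w = {v \<in> V. norm (T v - w) = norm (p w - w)}" for w
  have "(\<exists>v0\<in>V. \<forall>v\<in>V. norm (T v0 - w) \<le> norm (T v - w)) \<and>
    (\<exists>a\<in>A w. \<forall>b\<in>A w. norm a \<le> norm b) \<and> p w \<in> A w \<and> (\<forall>b\<in>A w. norm (p w) \<le> norm b)" for w
  proof -
    have "p w \<in> A w"
      unfolding A_def using K_subset_V p_in_K T_fixes_K by auto
    moreover have "\<forall>b\<in>A w. norm (p w) \<le> norm b"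
      unfolding A_def using residual_minimal_iff norm_p_le by auto
    moreover have "\<forall>v\<in>V. norm (T (p w) - w) \<le> norm (T v - w)"
      using T_fixes_K p_in_K T_in_K p_nearest by simp
    ultimately show ?thesis
      using K_subset_V p_in_K by blast
  qed
  moreover have "p (T (p w)) = p w" for w
    using T_fixes_K p_in_K p_unique[of "p w" "p w"] p_nearest[of "p w" "p w"] by simp
  ultimately show ?thesis
    unfolding pseudo_inverse_def Let_def INF_residual_eq A_def[symmetric] by blast
qed

lemma pseudo_inverse_unique:
  assumes "pseudo_inverse V W T S" "w \<in> W"
  shows "S w = p w"
proof -
  let ?A = "{v \<in> V. norm (T v - w) = norm (p w - w)}"
  have "S w \<in> ?A \<and> (\<forall>b\<in>?A. norm (S w) \<le> norm b)"
    using assms unfolding pseudo_inverse_def Let_def INF_residual_eq by simp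
  then have SA: "S w \<in> ?A" "\<forall>b\<in>?A. norm (S w) \<le> norm b"
    by blast+
  have "p w \<in> ?A"
    using K_subset_V p_in_K T_fixes_K by auto
  then have "norm (S w) \<le> norm (p w)"
    using SA(2) by blast
  moreover have "S w \<in> V" "T (S w) = p w"
    using SA(1) residual_minimal_iff by auto
  ultimately have "norm (T (S w)) = norm (S w)"
    using norm_p_le[of "S w" w] by simp
  then have "T (S w) = S w"
    using shrinks_norm_T unfolding shrinks_norm_def by blast
  with \<open>T (S w) = p w\<close> show ?thesis
    by simp
qed

end

lemma nested_subset:
  assumes "\<forall>i\<in>{1..<n}. C (Suc i) \<subseteq> C i" "1 \<le> i" "i \<le> n"
  shows "C n \<subseteq> C i"
  using assms(3,2)
proof (induction i rule: inc_induct)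
  case (step i)
  then have "C (Suc i) \<subseteq> C i" "C n \<subseteq> C (Suc i)"
    using assms(1) by simp_all
  then show ?case
    by blast
qed simp

lemma nearest_point_retraction_proj_comp:
  fixes C :: "nat \<Rightarrow> 'a::{real_inner,complete_space} set"
  assumes "n \<ge> 1" "\<forall>i\<in>{1..n}. closed (C i) \<and> convex (C i) \<and> C n \<subseteq> C i" "0 \<in> C n" "C n \<subseteq> V"
  shows "nearest_point_retraction V (C n) (proj_comp C n) (metric_proj (C n))"
proof
  have layers: "\<forall>i\<in>{1..n}. closed (C i) \<and> convex (C i) \<and> c \<in> C i" if "c \<in> C n" for c
    using that assms(2) by blast
  have Cn: "closed (C n)" "convex (C n)" "C n \<noteq> {}"
    using assms(1-3) by auto
  show "C n \<subseteq> V"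
    by (fact assms(4))
  show "proj_comp C n v \<in> C n" for v
    using proj_comp_in[of n C, OF assms(1) Cn] .
  show "proj_comp C n c = c" if "c \<in> C n" for c
    using layers[OF that] by (rule proj_comp_fixes)
  show "shrinks_norm (proj_comp C n)"
    using layers[OF assms(3)] by (rule shrinks_norm_proj_comp)
  show "metric_proj (C n) w \<in> C n" for w
    using metric_proj_closest(1)[OF Cn] .
  show "norm (metric_proj (C n) w - w) \<le> norm (c - w)" if "c \<in> C n" for w c
    using metric_proj_closest(2)[OF Cn, of w] that by (simp add: dist_norm norm_minus_commute)
  show "c = metric_proj (C n) w" if "c \<in> C n" "norm (c - w) = norm (metric_proj (C n) w - w)" for w c
    using metric_proj_closest(2)[OF Cn, of w] that
    by (intro metric_proj_eqI[OF Cn(1,2), symmetric]) (auto simp: dist_norm norm_minus_commute)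
qed

theorem mainTheorem9:
  fixes V :: "'a::{real_inner, complete_space} set"
    and C :: "nat \<Rightarrow> 'a set"
    and n :: nat
  assumes "n \<ge> 1"
    and "\<forall>i\<in>{1..n}. closed (C i) \<and> convex (C i)"
    and "0 \<in> C n"
    and "\<forall>i\<in>{1..<n}. C (Suc i) \<subseteq> C i"
    and "C 1 \<subseteq> V"
  shows "pseudo_inverse V V (proj_comp C n) (metric_proj (C n)) \<and>
         (\<forall>S. pseudo_inverse V V (proj_comp C n) S \<longrightarrow> (\<forall>w\<in>V. S w = metric_proj (C n) w))"
proof -
  have "\<forall>i\<in>{1..n}. closed (C i) \<and> convex (C i) \<and> C n \<subseteq> C i"
    using assms(2) nested_subset[OF assms(4)] by simp
  moreover have "C n \<subseteq> V"
    using nested_subset[OF assms(4) order.refl assms(1)] assms(5) by blast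
  ultimately interpret nearest_point_retraction V "C n" "proj_comp C n" "metric_proj (C n)"
    using assms(1,3) by (intro nearest_point_retraction_proj_comp)
  show ?thesis
    using pseudo_inverse_p pseudo_inverse_unique by blast
qed

end
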